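(* In the setting described in the context, the two-stage robust problem $w^*=\min_{x\in\mathcal X}c_1x+\max_{u\in\mathcal U(x)}\min_{y\in\mathcal Y(x,u)}c_2y$ is equivalent to the problem $\min c_1x+\eta$ over $x\in\mathcal X$, $\eta$, and, for each $\pi\in\mathcal P_\Pi$, vectors $u^\pi,y^\pi$, and for each $\gamma\in\mathcal R_\Pi$, vectors $v^\gamma,y^\gamma$, subject to: for all $\pi\in\mathcal P_\Pi$: $\eta\ge c_2y^\pi$, $y^\pi\in\mathcal Y(x,u^\pi)$, $u^\pi\in\arg\max\{(-Eu)^\intercal\pi: u\in\mathcal U(x)\}$; for all $\gamma\in\mathcal R_\Pi$: $y^\gamma\in\mathcal Y(x,v^\gamma)$, $v^\gamma\in\arg\max\{(-Ev)^\intercal\gamma: v\in\mathcal U(x)\}$; in particular this problem has optimal value $w^*$. The same holds when each argmax condition is replaced by the KKT optimality conditions of the corresponding linear program (yielding a single-level problem).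
   Context: $\mathcal X=\{x\in\mathbb Z^{m_x}_+\times\mathbb R^{n_x}_+: Ax\ge b\}$, $\mathcal U(x)=\{u\in\mathbb R^{n_u}_+: F(x)u\le h+Gx\}$ with $F(x)$ a matrix depending on $x$, $\mathcal Y(x,u)=\{y\in\mathbb R^{n_y}_+: B_2y\ge d-B_1x-Eu\}$. $\Pi=\{\pi\ge 0: B_2^\intercal\pi\le c_2^\intercal\}$, with finite sets of extreme points $\mathcal P_\Pi$ and extreme rays $\mathcal R_\Pi$. The optimal value of an infeasible minimization (maximization) problem is $+\infty$ ($-\infty$). Standing assumptions: (A1) $\mathcal U(x)\ne\emptyset$ for all $x\in\mathcal X$; (A2) $\mathcal U(x)$ is bounded for all $x\in\mathcal X$; (A3) $\min\{c_1x+c_2y: x\in\mathcal X,u\in\mathcal U(x),y\in\mathcal Y(x,u)\}$ has a finite optimal value. Two formulations are called equivalent if they have the same optimal value and any optimal first-stage solution of one is optimal for the other, and vice versa. *)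

theory Defs
  imports "HOL-Analysis.Analysis" "HOL-Library.Extended_Real"
begin

text \<open>The integrality of the first m_x components of x is expressed by an index set I.\<close>

definition Xset :: "real^'x^'a \<Rightarrow> real^'a \<Rightarrow> 'x set \<Rightarrow> (real^'x) set" where
  "Xset A b I = {x. 0 \<le> x \<and> (\<forall>i\<in>I. x$i \<in> \<int>) \<and> b \<le> A *v x}"

definition Uset :: "(real^'x \<Rightarrow> real^'u^'r) \<Rightarrow> real^'x^'r \<Rightarrow> real^'r \<Rightarrow> real^'x \<Rightarrow> (real^'u) set" where
  "Uset F G h x = {u. 0 \<le> u \<and> F x *v u \<le> h + G *v x}"

definition Yset :: "real^'x^'d \<Rightarrow> real^'y^'d \<Rightarrow> real^'u^'d \<Rightarrow> real^'d \<Rightarrow> real^'x \<Rightarrow> real^'u \<Rightarrow> (real^'y) set" where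
  "Yset B1 B2 E d x u = {y. 0 \<le> y \<and> d - B1 *v x - E *v u \<le> B2 *v y}"

definition Piset :: "real^'y^'d \<Rightarrow> real^'y \<Rightarrow> (real^'d) set" where
  "Piset B2 c2 = {p. 0 \<le> p \<and> transpose B2 *v p \<le> c2}"

definition Pi_cone :: "real^'y^'d \<Rightarrow> (real^'d) set" where
  "Pi_cone B2 = {g. 0 \<le> g \<and> transpose B2 *v g \<le> 0}"

definition extreme_ray_of :: "'a::real_vector \<Rightarrow> 'a set \<Rightarrow> bool" where
  "extreme_ray_of g C \<longleftrightarrow> g \<in> C \<and> g \<noteq> 0 \<and>
     (\<forall>a\<in>C. \<forall>b\<in>C. g = a + b \<longrightarrow> (\<exists>t\<ge>0. a = t *\<^sub>R g) \<and> (\<exists>t\<ge>0. b = t *\<^sub>R g))"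

definition is_argmax :: "('a \<Rightarrow> real) \<Rightarrow> 'a set \<Rightarrow> 'a \<Rightarrow> bool" where
  "is_argmax f S u \<longleftrightarrow> u \<in> S \<and> (\<forall>v\<in>S. f v \<le> f u)"

text \<open>KKT conditions of the LP  max { c . u : M u \<le> r, u \<ge> 0 }  with multiplier lam.\<close>
definition lp_kkt :: "real^'u^'r \<Rightarrow> real^'r \<Rightarrow> real^'u \<Rightarrow> real^'u \<Rightarrow> real^'r \<Rightarrow> bool" where
  "lp_kkt M r c u lam \<longleftrightarrow>
     0 \<le> u \<and> M *v u \<le> r \<and> 0 \<le> lam \<and> c \<le> transpose M *v lam \<and>
     (\<forall>i. lam$i * (r - M *v u)$i = 0) \<and>
     (\<forall>j. u$j * (transpose M *v lam - c)$j = 0)"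

text \<open>Second-stage value min {c2 y : y \<in> Y(x,u)} (+\<infinity> if infeasible),
  worst case sup over U(x) (-\<infinity> if empty), robust objective and value w*.\<close>
definition second_stage :: "real^'x^'d \<Rightarrow> real^'y^'d \<Rightarrow> real^'u^'d \<Rightarrow> real^'d \<Rightarrow> real^'y \<Rightarrow> real^'x \<Rightarrow> real^'u \<Rightarrow> ereal" where
  "second_stage B1 B2 E d c2 x u = (INF y\<in>Yset B1 B2 E d x u. ereal (c2 \<bullet> y))"

definition worst_case where
  "worst_case F G h B1 B2 E d c2 x = (SUP u\<in>Uset F G h x. second_stage B1 B2 E d c2 x u)"

definition robust_obj where
  "robust_obj F G h B1 B2 E d c1 c2 x = ereal (c1 \<bullet> x) + worst_case F G h B1 B2 E d c2 x"

definition robust_val where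
  "robust_val A b I F G h B1 B2 E d c1 c2 =
     (INF x\<in>Xset A b I. robust_obj F G h B1 B2 E d c1 c2 x)"

text \<open>Optimal first-stage solution of the robust problem: feasible (all second stages
  feasible, i.e. finite worst case) and attaining w*.\<close>
definition robust_opt where
  "robust_opt A b I F G h B1 B2 E d c1 c2 x \<longleftrightarrow>
     x \<in> Xset A b I \<and> worst_case F G h B1 B2 E d c2 x < \<infinity> \<and>
     robust_obj F G h B1 B2 E d c1 c2 x = robust_val A b I F G h B1 B2 E d c1 c2"

text \<open>Feasibility for the reformulation; sel x p u is the condition imposed on the
  adversarial response u for dual vector p (argmax or KKT).\<close>
definition reform_feasible where
  "reform_feasible A b I B1 B2 E d c2 P R sel x eta uP yP vR yR \<longleftrightarrow>
     x \<in> Xset A b I \<and>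
     (\<forall>p\<in>P. ereal (c2 \<bullet> yP p) \<le> eta \<and> yP p \<in> Yset B1 B2 E d x (uP p) \<and> sel x p (uP p)) \<and>
     (\<forall>g\<in>R. yR g \<in> Yset B1 B2 E d x (vR g) \<and> sel x g (vR g))"

definition reform_val where
  "reform_val A b I B1 B2 E d c1 c2 P R sel =
     Inf {ereal (c1 \<bullet> x) + ereal eta | x eta uP yP vR yR.
            reform_feasible A b I B1 B2 E d c2 P R sel x (ereal eta) uP yP vR yR}"

definition reform_opt where
  "reform_opt A b I B1 B2 E d c1 c2 P R sel x \<longleftrightarrow>
     (\<exists>eta uP yP vR yR. reform_feasible A b I B1 B2 E d c2 P R sel x (ereal eta) uP yP vR yR \<and>
        ereal (c1 \<bullet> x) + ereal eta = reform_val A b I B1 B2 E d c1 c2 P R sel)"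

definition sel_argmax where
  "sel_argmax F G h E x p u \<longleftrightarrow> is_argmax (\<lambda>v. (- (E *v v)) \<bullet> p) (Uset F G h x) u"

definition sel_kkt where
  "sel_kkt F G h E x p u \<longleftrightarrow> (\<exists>lam. lp_kkt (F x) (h + G *v x) (- (transpose E *v p)) u lam)"

end

(* Fix a first-stage decision x and write r(u) = d - B1 x - E u.  By LP duality the
   second-stage value min {c2 y : y in Y(x,u)} equals max {r(u) pi : pi in Pi}, attained at an
   extreme point of Pi, and Y(x,u) is empty exactly when r(u) gamma > 0 for some extreme ray
   gamma of the recession cone of Pi.  In both dual objectives u enters only through the
   linear term (-E u) pi, so for each fixed pi the adversary's best move is a maximiser u^pi
   of (-E u) pi over U(x).  Hence the worst case over U(x) is at most eta iff the responses
   u^pi to all extreme points admit second-stage solutions of cost at most eta and the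
   responses to all extreme rays admit feasible ones, which is the constraint system of the
   reformulation read as an epigraph of the worst-case function.  For a linear program the
   KKT conditions characterise the maximisers, so the KKT variant is the same problem.
   The LP duality itself comes from separating a point from the finitely generated, hence
   closed, cone of attainable pairs (right-hand side, objective value). *)
theory Submission
  imports Defs
begin

lemma inner_left_mono_nonneg:
  fixes x y u :: "real^'n"
  assumes "x \<le> y" "0 \<le> u"
  shows "x \<bullet> u \<le> y \<bullet> u"
  using assms by (auto simp: less_eq_vec_def inner_vec_def intro!: sum_mono mult_right_mono)

lemma less_eq_vec_by_inner:
  fixes x y :: "real^'n"
  assumes "\<And>u. 0 \<le> u \<Longrightarrow> x \<bullet> u \<le> y \<bullet> u"
  shows "x \<le> y"
proof -
  have "x \<bullet> axis i 1 \<le> y \<bullet> axis i 1" for i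
    using assms by (simp add: less_eq_vec_def axis_def)
  then show "x \<le> y" by (simp add: less_eq_vec_def inner_axis)
qed

lemma axis_nonneg: "0 \<le> (axis i 1 :: real^'n)"
  by (simp add: less_eq_vec_def axis_def)

lemma inner_nonneg_vec: "0 \<le> a \<Longrightarrow> 0 \<le> b \<Longrightarrow> 0 \<le> a \<bullet> (b::real^'n)"
  using inner_left_mono_nonneg[of 0 a b] by simp

lemma inner_eq_0_iff_nonneg_vec:
  fixes a b :: "real^'n"
  assumes "0 \<le> a" "0 \<le> b"
  shows "a \<bullet> b = 0 \<longleftrightarrow> (\<forall>i. a $ i * b $ i = 0)"
  using assms by (simp add: inner_vec_def sum_nonneg_eq_0_iff less_eq_vec_def)

lemma inner_vector_matrix_mult: "u \<bullet> (l v* M) = l \<bullet> (M *v (u::real^'n))"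
  by (metis dot_lmul_matrix inner_commute)

lemma matrix_vector_mult_uminus: "(- A) *v x = - (A *v (x::real^'n))"
  by (simp add: vec_eq_iff matrix_vector_mult_def sum_negf)

lemma convex_cone_sum:
  assumes "convex_cone S" "\<And>i. i \<in> A \<Longrightarrow> f i \<in> S"
  shows "sum f A \<in> S"
  using assms(2)
proof (induction A rule: infinite_finite_induct)
  case (insert i A)
  then show ?case using assms(1) by (simp add: convex_cone_add)
qed (use assms(1) convex_cone_contains_0 in auto)

lemma separating_functional_closed_convex_cone:
  fixes K :: "'a::euclidean_space set"
  assumes "closed K" "convex_cone K" "b \<notin> K"
  shows "\<exists>w. (\<forall>x\<in>K. w \<bullet> x \<le> 0) \<and> 0 < w \<bullet> b"
proof -
  obtain a c where ac: "a \<bullet> b < c" "\<forall>x\<in>K. c < a \<bullet> x"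
    using separating_hyperplane_closed_point assms convex_cone_def by metis
  have "c < 0" using ac(2) convex_cone_contains_0[OF assms(2)] by fastforce
  have "0 \<le> a \<bullet> x" if "x \<in> K" for x
  proof (rule ccontr)
    assume neg: "\<not> 0 \<le> a \<bullet> x"
    have "(c / (a \<bullet> x)) *\<^sub>R x \<in> K"
      using neg \<open>c < 0\<close> that assms(2) by (intro convex_cone_scaleR) (auto simp: divide_nonpos_neg)
    then show False using ac(2) neg by fastforce
  qed
  then show ?thesis using ac \<open>c < 0\<close> by (intro exI[of _ "-a"]) auto
qed

section \<open>Linear programming duality\<close>

definition lp_feasible :: "real^'n^'m \<Rightarrow> real^'m \<Rightarrow> (real^'n) set" where
  "lp_feasible M r = {u. 0 \<le> u \<and> M *v u \<le> r}"

definition lp_cone :: "real^'n^'m \<Rightarrow> real^'n \<Rightarrow> ((real^'m) \<times> real) set" where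
  "lp_cone M c = {(M *v u + s, c \<bullet> u) | u s. 0 \<le> u \<and> 0 \<le> s}"

lemma convex_cone_lp_cone: "convex_cone (lp_cone M c)"
  unfolding convex_cone_iff
proof (intro conjI ballI allI impI)
  show "0 \<in> lp_cone M c" unfolding lp_cone_def
    by (intro CollectI exI[of _ 0] exI[of _ "0::real^'m"]) (simp add: zero_prod_def)
next
  fix x y assume "x \<in> lp_cone M c" "y \<in> lp_cone M c"
  then obtain u s u' s' where "0 \<le> u" "0 \<le> s" "0 \<le> u'" "0 \<le> s'"
    "x = (M *v u + s, c \<bullet> u)" "y = (M *v u' + s', c \<bullet> u')"
    unfolding lp_cone_def by blast
  then show "x + y \<in> lp_cone M c" unfolding lp_cone_def
    by (intro CollectI exI[of _ "u + u'"] exI[of _ "s + s'"])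
       (auto simp: matrix_vector_right_distrib inner_add_right algebra_simps)
next
  fix x and t :: real assume "x \<in> lp_cone M c" "0 \<le> t"
  then obtain u s where "0 \<le> u" "0 \<le> s" "x = (M *v u + s, c \<bullet> u)"
    unfolding lp_cone_def by blast
  then show "t *\<^sub>R x \<in> lp_cone M c" unfolding lp_cone_def using \<open>0 \<le> t\<close>
    by (intro CollectI exI[of _ "t *\<^sub>R u"] exI[of _ "t *\<^sub>R s"])
       (auto simp: matrix_vector_mult_scaleR scaleR_add_right less_eq_vec_def)
qed

lemma lp_cone_eq_hull:
  "lp_cone M c = convex_cone hull (range (\<lambda>j. (column j M, c $ j)) \<union> range (\<lambda>i. (axis i 1, 0)))"
  (is "_ = convex_cone hull ?gens")
proof
  show "lp_cone M c \<subseteq> convex_cone hull ?gens"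
  proof
    fix x assume "x \<in> lp_cone M c"
    then obtain u s where us: "0 \<le> u" "0 \<le> s" "x = (M *v u + s, c \<bullet> u)"
      unfolding lp_cone_def by blast
    have "x = (\<Sum>j\<in>UNIV. u $ j *\<^sub>R (column j M, c $ j)) + (\<Sum>i\<in>UNIV. s $ i *\<^sub>R (axis i 1, 0))"
      using basis_expansion[of s]
      by (simp add: us(3) fst_sum snd_sum prod_eq_iff matrix_mult_sum scalar_mult_eq_scaleR
                    inner_vec_def mult.commute)
    also have "\<dots> \<in> convex_cone hull ?gens"
      using us(1,2)
      by (intro convex_cone_hull_add convex_cone_sum[OF convex_cone_convex_cone_hull]
            convex_cone_hull_mul hull_inc) (auto simp: less_eq_vec_def)
    finally show "x \<in> convex_cone hull ?gens" .
  qed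
  have "(column j M, c $ j) \<in> lp_cone M c" for j
    unfolding lp_cone_def
    by (intro CollectI exI[of _ "axis j 1"] exI[of _ 0])
       (simp add: matrix_vector_mult_basis inner_axis axis_nonneg)
  moreover have "(axis i 1, 0) \<in> lp_cone M c" for i
    unfolding lp_cone_def
    by (intro CollectI exI[of _ 0] exI[of _ "axis i 1"]) (simp add: axis_nonneg)
  ultimately show "convex_cone hull ?gens \<subseteq> lp_cone M c"
    by (intro hull_minimal convex_cone_lp_cone) auto
qed

lemma closed_lp_cone: "closed (lp_cone M c)"
  unfolding lp_cone_eq_hull by (intro closed_convex_cone_hull) auto

lemma mem_lp_cone_iff: "(r, z) \<in> lp_cone M c \<longleftrightarrow> (\<exists>u\<in>lp_feasible M r. z = c \<bullet> u)"
proof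
  assume "(r, z) \<in> lp_cone M c"
  then obtain u s where "0 \<le> u" "0 \<le> s" "r = M *v u + s" "z = c \<bullet> u"
    unfolding lp_cone_def by blast
  then show "\<exists>u\<in>lp_feasible M r. z = c \<bullet> u"
    by (auto simp: lp_feasible_def less_eq_vec_def)
next
  assume "\<exists>u\<in>lp_feasible M r. z = c \<bullet> u"
  then obtain u where "0 \<le> u" "M *v u \<le> r" "z = c \<bullet> u"
    unfolding lp_feasible_def by blast
  then show "(r, z) \<in> lp_cone M c" unfolding lp_cone_def
    by (intro CollectI exI[of _ u] exI[of _ "r - M *v u"]) (auto simp: less_eq_vec_def)
qed

lemma lp_cone_separation:
  assumes "(p, z) \<notin> lp_cone M c"
  obtains w \<sigma> where "w \<le> 0" "0 < w \<bullet> p + \<sigma> * z"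
    "\<And>u. 0 \<le> u \<Longrightarrow> w \<bullet> (M *v u) + \<sigma> * (c \<bullet> u) \<le> 0"
proof -
  obtain w \<sigma> where sep: "\<forall>x\<in>lp_cone M c. (w, \<sigma>) \<bullet> x \<le> 0" "0 < (w, \<sigma>) \<bullet> (p, z)"
    using separating_functional_closed_convex_cone[OF closed_lp_cone convex_cone_lp_cone assms]
    by auto
  have mem: "(M *v u + s, c \<bullet> u) \<in> lp_cone M c" if "0 \<le> u" "0 \<le> s" for u s
    using that unfolding lp_cone_def by blast
  have "(w, \<sigma>) \<bullet> (M *v 0 + axis i 1, c \<bullet> 0) \<le> 0" for i
    using sep(1) mem[OF order.refl axis_nonneg] by blast
  then have "w \<le> 0" by (simp add: inner_axis less_eq_vec_def)
  moreover have "w \<bullet> (M *v u) + \<sigma> * (c \<bullet> u) \<le> 0" if "0 \<le> u" for u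
    using sep(1) mem[OF that order.refl] by fastforce
  ultimately show thesis using that sep(2) by simp
qed

lemma lp_farkas:
  assumes "lp_feasible M r = {}"
  shows "\<exists>l\<ge>0. 0 \<le> transpose M *v l \<and> r \<bullet> l < 0"
proof -
  have "(r, 0) \<notin> lp_cone M 0"
    using assms by (simp add: mem_lp_cone_iff)
  then obtain w \<sigma> where w: "w \<le> 0" "0 < w \<bullet> r" "\<And>u. 0 \<le> u \<Longrightarrow> w \<bullet> (M *v u) \<le> 0"
    by (rule lp_cone_separation) auto
  have "0 \<le> transpose M *v (- w)"
    using w(3) by (intro less_eq_vec_by_inner) (simp add: dot_lmul_matrix)
  moreover have "0 \<le> - w" using w(1) by (simp add: less_eq_vec_def)
  ultimately show ?thesis using w(2) by (intro exI[of _ "-w"]) (simp add: inner_commute)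
qed

lemma lp_weak_duality:
  assumes "u \<in> lp_feasible M r" "0 \<le> l" "c \<le> transpose M *v l"
  shows "c \<bullet> u \<le> r \<bullet> l"
proof -
  have "c \<bullet> u \<le> (transpose M *v l) \<bullet> u"
    using assms by (intro inner_left_mono_nonneg) (auto simp: lp_feasible_def)
  also have "\<dots> = (M *v u) \<bullet> l" by (simp add: inner_vector_matrix_mult inner_commute)
  also have "\<dots> \<le> r \<bullet> l"
    using assms by (intro inner_left_mono_nonneg) (auto simp: lp_feasible_def)
  finally show ?thesis .
qed

lemma lp_optimum_attained:
  assumes "lp_feasible M r \<noteq> {}" and "\<And>u. u \<in> lp_feasible M r \<Longrightarrow> c \<bullet> u \<le> K"
  shows "\<exists>u. is_argmax (\<lambda>v. c \<bullet> v) (lp_feasible M r) u"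
proof -
  let ?S = "(\<lambda>u. c \<bullet> u) ` lp_feasible M r"
  have bdd: "bdd_above ?S" using assms(2) by (auto intro!: bdd_aboveI)
  have "(r, Sup ?S) \<in> closure (lp_cone M c)"
    unfolding closure_approachable
  proof (intro allI impI)
    fix e :: real assume "0 < e"
    have "Sup ?S - e < Sup ?S" using \<open>0 < e\<close> by simp
    then obtain u where u: "u \<in> lp_feasible M r" "Sup ?S - e < c \<bullet> u"
      using less_cSup_iff[OF _ bdd] assms(1) by auto
    moreover have "c \<bullet> u \<le> Sup ?S" using bdd u(1) by (intro cSup_upper) auto
    ultimately have "dist (r, c \<bullet> u) (r, Sup ?S) < e"
      by (simp add: dist_Pair_Pair dist_real_def)
    moreover have "(r, c \<bullet> u) \<in> lp_cone M c" using u(1) by (auto simp: mem_lp_cone_iff)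
    ultimately show "\<exists>y\<in>lp_cone M c. dist y (r, Sup ?S) < e" by blast
  qed
  then obtain u where "u \<in> lp_feasible M r" "Sup ?S = c \<bullet> u"
    by (auto simp: closed_lp_cone closure_closed mem_lp_cone_iff)
  moreover have "c \<bullet> v \<le> Sup ?S" if "v \<in> lp_feasible M r" for v
    using bdd that by (intro cSup_upper) auto
  ultimately show ?thesis unfolding is_argmax_def by auto
qed

text \<open>Separate the unattainable pair \<open>(r, c \<bullet> u + e)\<close> from \<open>lp_cone M c\<close>;
  the normalised separating functional is the dual vector.\<close>
lemma lp_dual_approx:
  assumes opt: "is_argmax (\<lambda>v. c \<bullet> v) (lp_feasible M r) u" and "0 < e"
  shows "\<exists>l\<ge>0. c \<le> transpose M *v l \<and> r \<bullet> l < c \<bullet> u + e"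
proof -
  have "(r, c \<bullet> u + e) \<notin> lp_cone M c"
  proof
    assume "(r, c \<bullet> u + e) \<in> lp_cone M c"
    then obtain v where "v \<in> lp_feasible M r" "c \<bullet> u + e = c \<bullet> v"
      by (auto simp: mem_lp_cone_iff)
    then show False using opt \<open>0 < e\<close> by (auto simp: is_argmax_def)
  qed
  then obtain w \<sigma> where w: "w \<le> 0" "0 < w \<bullet> r + \<sigma> * (c \<bullet> u + e)"
    "\<And>v. 0 \<le> v \<Longrightarrow> w \<bullet> (M *v v) + \<sigma> * (c \<bullet> v) \<le> 0"
    by (rule lp_cone_separation) blast
  have u: "0 \<le> u" "M *v u \<le> r" using opt by (auto simp: is_argmax_def lp_feasible_def)
  have "w \<bullet> r \<le> w \<bullet> (M *v u)"
    using inner_left_mono_nonneg[OF u(2), of "-w"] w(1) by (simp add: inner_commute less_eq_vec_def)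
  then have "0 < \<sigma> * e"
    using w(2) w(3)[OF u(1)] by (simp add: distrib_left)
  then have "0 < \<sigma>" using \<open>0 < e\<close> by (simp add: zero_less_mult_iff)
  define l where "l = - (1 / \<sigma>) *\<^sub>R w"
  have "0 \<le> l" using w(1) \<open>0 < \<sigma>\<close> by (auto simp: l_def less_eq_vec_def divide_nonpos_pos)
  moreover have "c \<le> transpose M *v l"
  proof (rule less_eq_vec_by_inner)
    fix v :: "real^'a" assume "0 \<le> v"
    then show "c \<bullet> v \<le> (transpose M *v l) \<bullet> v"
      using w(3)[OF \<open>0 \<le> v\<close>] \<open>0 < \<sigma>\<close> by (simp add: dot_lmul_matrix l_def field_simps)
  qed
  moreover have "r \<bullet> l < c \<bullet> u + e"
    using w(2) \<open>0 < \<sigma>\<close> by (simp add: l_def inner_commute[of r] field_simps)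
  ultimately show ?thesis by blast
qed

lemma lp_dual_feasible_iff:
  "l \<in> lp_feasible (- transpose M) (- c) \<longleftrightarrow> 0 \<le> l \<and> c \<le> transpose M *v l"
  unfolding lp_feasible_def matrix_vector_mult_uminus by (auto simp: less_eq_vec_def)

lemma lp_strong_duality:
  assumes opt: "is_argmax (\<lambda>v. c \<bullet> v) (lp_feasible M r) u"
  shows "\<exists>l\<ge>0. c \<le> transpose M *v l \<and> c \<bullet> u = r \<bullet> l"
proof -
  let ?D = "lp_feasible (- transpose M) (- c)"
  have u: "u \<in> lp_feasible M r" using opt by (simp add: is_argmax_def)
  have "?D \<noteq> {}"
    using lp_dual_approx[OF opt zero_less_one] by (auto simp: lp_dual_feasible_iff)
  moreover have "(- r) \<bullet> l \<le> - (c \<bullet> u)" if "l \<in> ?D" for l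
    using lp_weak_duality[OF u] that by (simp add: lp_dual_feasible_iff)
  ultimately obtain l where l: "is_argmax (\<lambda>l. (- r) \<bullet> l) ?D l"
    using lp_optimum_attained by blast
  then have dual: "0 \<le> l" "c \<le> transpose M *v l"
    by (auto simp: is_argmax_def lp_dual_feasible_iff)
  have "r \<bullet> l \<le> c \<bullet> u"
  proof (rule ccontr)
    assume "\<not> r \<bullet> l \<le> c \<bullet> u"
    then obtain l' where "l' \<in> ?D" "r \<bullet> l' < r \<bullet> l"
      using lp_dual_approx[OF opt, of "r \<bullet> l - c \<bullet> u"] by (auto simp: lp_dual_feasible_iff)
    then show False using l unfolding is_argmax_def by force
  qed
  moreover have "c \<bullet> u \<le> r \<bullet> l" using lp_weak_duality[OF u dual] .
  ultimately show ?thesis using dual by auto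
qed

text \<open>Complementary slackness: the duality gap \<open>r \<bullet> lam - c \<bullet> u\<close> is the sum of the
  two nonnegative inner products whose termwise vanishing the KKT conditions require.\<close>
lemma lp_kkt_iff_zero_gap:
  "lp_kkt M r c u lam \<longleftrightarrow>
     u \<in> lp_feasible M r \<and> 0 \<le> lam \<and> c \<le> transpose M *v lam \<and> c \<bullet> u = r \<bullet> lam"
proof (cases "u \<in> lp_feasible M r \<and> 0 \<le> lam \<and> c \<le> transpose M *v lam")
  case True
  then have slack: "0 \<le> r - M *v u" "0 \<le> transpose M *v lam - c" "0 \<le> u" "0 \<le> lam"
    by (auto simp: lp_feasible_def less_eq_vec_def)
  have "lam \<bullet> (r - M *v u) + u \<bullet> (transpose M *v lam - c) = r \<bullet> lam - c \<bullet> u"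
    by (simp add: inner_diff_right inner_vector_matrix_mult inner_commute)
  then have "c \<bullet> u = r \<bullet> lam \<longleftrightarrow> lam \<bullet> (r - M *v u) = 0 \<and> u \<bullet> (transpose M *v lam - c) = 0"
    using inner_nonneg_vec[OF slack(4,1)] inner_nonneg_vec[OF slack(3,2)] by linarith
  then show ?thesis
    using True slack unfolding lp_kkt_def
    by (simp add: inner_eq_0_iff_nonneg_vec lp_feasible_def del: transpose_matrix_vector)
qed (auto simp: lp_kkt_def lp_feasible_def)

lemma lp_kkt_iff_argmax:
  "(\<exists>lam. lp_kkt M r c u lam) \<longleftrightarrow> is_argmax (\<lambda>v. c \<bullet> v) (lp_feasible M r) u"
  using lp_weak_duality lp_strong_duality[of c M r u]
  by (fastforce simp: lp_kkt_iff_zero_gap is_argmax_def)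

lemma sel_kkt_eq_sel_argmax: "sel_kkt F G h E = sel_argmax F G h E"
proof (intro ext)
  fix x p u
  have obj: "(\<lambda>v. (- (E *v v)) \<bullet> p) = (\<lambda>v. (- (transpose E *v p)) \<bullet> v)"
    by (simp add: inner_vector_matrix_mult inner_commute)
  have U: "Uset F G h x = lp_feasible (F x) (h + G *v x)"
    by (simp add: Uset_def lp_feasible_def)
  show "sel_kkt F G h E x p u = sel_argmax F G h E x p u"
    unfolding sel_kkt_def sel_argmax_def lp_kkt_iff_argmax obj U ..
qed

section \<open>Extreme points and extreme rays\<close>

lemma lp_feasible_eq_halfspaces:
  "lp_feasible M r = (\<Inter>i. {u. axis i 1 \<bullet> u \<ge> 0}) \<inter> (\<Inter>i. {u. M $ i \<bullet> u \<le> r $ i})"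
  by (auto simp: lp_feasible_def less_eq_vec_def inner_axis' matrix_vector_mul_component)

lemma closed_lp_feasible: "closed (lp_feasible M r)"
  unfolding lp_feasible_eq_halfspaces
  by (intro closed_Int closed_INT ballI closed_halfspace_ge closed_halfspace_le)

lemma convex_lp_feasible: "convex (lp_feasible M r)"
  unfolding lp_feasible_eq_halfspaces
  by (intro convex_Int convex_INT ballI convex_halfspace_ge convex_halfspace_le)

lemma convex_cone_lp_feasible_0: "convex_cone (lp_feasible M 0)"
  unfolding convex_cone_iff lp_feasible_def
  by (auto simp: matrix_vector_right_distrib matrix_vector_mult_scaleR less_eq_vec_def
           intro!: add_nonpos_nonpos mult_nonneg_nonpos)

lemma norm_le_inner_one: "0 \<le> x \<Longrightarrow> norm x \<le> 1 \<bullet> (x::real^'n)"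
  using norm_le_l1_cart[of x] by (simp add: inner_vec_def less_eq_vec_def)

lemma inner_one_pos:
  fixes x :: "real^'n"
  assumes "0 \<le> x" "x \<noteq> 0"
  shows "0 < 1 \<bullet> x"
  using norm_le_inner_one[OF assms(1)] assms(2) by (metis order.strict_trans2 zero_less_norm_iff)

text \<open>The functional \<open>1 \<bullet> x\<close> dominates the norm on the nonnegative orthant, so its
  minimisers form a compact face, which has an extreme point.\<close>
lemma extreme_point_exists_nonneg:
  fixes S :: "(real^'n) set"
  assumes "closed S" "convex S" "S \<noteq> {}" "\<And>x. x \<in> S \<Longrightarrow> 0 \<le> x"
  shows "\<exists>e. e extreme_point_of S"
proof -
  obtain s where s: "s \<in> S" using assms(3) by blast
  let ?S0 = "S \<inter> {x. 1 \<bullet> x \<le> 1 \<bullet> s}"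
  have "norm x \<le> 1 \<bullet> s" if "x \<in> ?S0" for x
    using that norm_le_inner_one[OF assms(4), of x] by auto
  then have cpt: "compact ?S0"
    unfolding compact_eq_bounded_closed
    by (auto intro!: boundedI[of _ "1 \<bullet> s"] closed_Int closed_halfspace_le assms(1))
  have "?S0 \<noteq> {}" using s by auto
  moreover have "continuous_on ?S0 (\<lambda>x. 1 \<bullet> x)" by (intro continuous_intros)
  ultimately have "\<exists>m\<in>?S0. \<forall>y\<in>?S0. 1 \<bullet> m \<le> 1 \<bullet> y"
    by (rule continuous_attains_inf[OF cpt])
  then obtain m where m: "m \<in> ?S0" "\<And>y. y \<in> ?S0 \<Longrightarrow> 1 \<bullet> m \<le> 1 \<bullet> y" by blast
  then have min: "1 \<bullet> m \<le> 1 \<bullet> x" if "x \<in> S" for x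
    using that s by (cases "1 \<bullet> x \<le> 1 \<bullet> s") force+
  let ?F = "S \<inter> {x. 1 \<bullet> x = 1 \<bullet> m}"
  have face: "?F face_of S"
    using assms(2) min by (rule face_of_Int_supporting_hyperplane_ge)
  have "norm x \<le> 1 \<bullet> m" if "x \<in> ?F" for x
    using that norm_le_inner_one[OF assms(4), of x] by auto
  then have "compact ?F"
    unfolding compact_eq_bounded_closed
    by (auto intro!: boundedI[of _ "1 \<bullet> m"] closed_Int closed_hyperplane assms(1))
  moreover have "convex ?F" by (intro convex_Int assms(2) convex_hyperplane)
  moreover have "?F \<noteq> {}" using m by auto
  ultimately obtain e where "e extreme_point_of ?F" by (rule extreme_point_exists_convex)
  then show ?thesis using extreme_point_of_face[OF face] by blast
qed

lemma extreme_point_exists_argmax: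
  fixes S :: "(real^'n) set"
  assumes "closed S" "convex S" "\<And>x. x \<in> S \<Longrightarrow> 0 \<le> x"
    and "is_argmax (\<lambda>x. a \<bullet> x) S x0"
  shows "\<exists>e. e extreme_point_of S \<and> is_argmax (\<lambda>x. a \<bullet> x) S e"
proof -
  let ?F = "S \<inter> {x. a \<bullet> x = a \<bullet> x0}"
  have face: "?F face_of S"
    using assms(2,4) by (intro face_of_Int_supporting_hyperplane_le) (auto simp: is_argmax_def)
  have "\<exists>e. e extreme_point_of ?F"
    using assms(1-4)
    by (intro extreme_point_exists_nonneg closed_Int closed_hyperplane convex_Int convex_hyperplane)
       (auto simp: is_argmax_def)
  then obtain e where "e extreme_point_of S" "e \<in> ?F"
    using extreme_point_of_face[OF face] by blast
  then show ?thesis using assms(4) by (auto simp: is_argmax_def extreme_point_of_def)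
qed

text \<open>Normalising the summands of \<open>e = a + b\<close> into the base puts \<open>e\<close> on the segment
  between them.\<close>
lemma extreme_point_of_base_summand:
  fixes K :: "(real^'n) set"
  assumes "conic K" "\<And>x. x \<in> K \<Longrightarrow> 0 \<le> x"
    and e: "e extreme_point_of (K \<inter> {x. 1 \<bullet> x = 1})"
    and ab: "a \<in> K" "b \<in> K" "e = a + b"
  shows "\<exists>t\<ge>0. a = t *\<^sub>R e"
proof -
  let ?C = "K \<inter> {x. 1 \<bullet> x = 1}"
  consider "a = 0" | "b = 0" | "a \<noteq> 0" "b \<noteq> 0" by blast
  then show ?thesis
  proof cases
    case 1
    then show ?thesis by (intro exI[of _ 0]) simp
  next
    case 2
    then show ?thesis using ab(3) by (intro exI[of _ 1]) simp
  next
    case 3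
    define \<alpha> \<beta> where "\<alpha> = 1 \<bullet> a" and "\<beta> = 1 \<bullet> b"
    have pos: "0 < \<alpha>" "0 < \<beta>"
      using 3 ab(1,2) assms(2) inner_one_pos by (auto simp: \<alpha>_def \<beta>_def)
    have sum1: "\<alpha> + \<beta> = 1"
      using e ab(3) by (simp add: \<alpha>_def \<beta>_def extreme_point_of_def inner_add_right)
    define a' b' where "a' = (1 / \<alpha>) *\<^sub>R a" and "b' = (1 / \<beta>) *\<^sub>R b"
    have C: "a' \<in> ?C" "b' \<in> ?C"
      using assms(1) ab(1,2) pos by (auto simp: a'_def b'_def \<alpha>_def \<beta>_def conic_def)
    have a: "a = \<alpha> *\<^sub>R a'" and b: "b = \<beta> *\<^sub>R b'" using pos by (auto simp: a'_def b'_def)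
    have "1 - \<beta> = \<alpha>" using sum1 by simp
    then have comb: "e = (1 - \<beta>) *\<^sub>R a' + \<beta> *\<^sub>R b'"
      using ab(3) a b by simp
    have "a' = b'"
    proof (rule ccontr)
      assume "a' \<noteq> b'"
      moreover have "\<beta> < 1" using pos sum1 by simp
      ultimately have "e \<in> open_segment a' b'"
        using comb pos unfolding in_segment(2) by blast
      then show False using e C unfolding extreme_point_of_def by blast
    qed
    then have "e = ((1 - \<beta>) + \<beta>) *\<^sub>R a'" using comb by (simp only: scaleR_add_left)
    then have "e = a'" by simp
    then show ?thesis using a pos less_imp_le by blast
  qed
qed

lemma extreme_ray_of_base:
  fixes K :: "(real^'n) set"
  assumes "conic K" "\<And>x. x \<in> K \<Longrightarrow> 0 \<le> x"
    and e: "e extreme_point_of (K \<inter> {x. 1 \<bullet> x = 1})"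
  shows "extreme_ray_of e K"
proof -
  have "e \<in> K" "e \<noteq> 0" using e by (auto simp: extreme_point_of_def)
  moreover have "(\<exists>t\<ge>0. a = t *\<^sub>R e) \<and> (\<exists>t\<ge>0. b = t *\<^sub>R e)"
    if "a \<in> K" "b \<in> K" "e = a + b" for a b
    using extreme_point_of_base_summand[OF assms, of a b] extreme_point_of_base_summand[OF assms, of b a]
      that by (simp add: add.commute)
  ultimately show ?thesis unfolding extreme_ray_of_def by blast
qed

lemma extreme_ray_exists_nonneg_cone:
  fixes K :: "(real^'n) set"
  assumes "closed K" "convex_cone K" "\<And>x. x \<in> K \<Longrightarrow> 0 \<le> x"
    and "l \<in> K" "0 < a \<bullet> l"
  shows "\<exists>g. extreme_ray_of g K \<and> 0 < a \<bullet> g"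
proof -
  let ?C = "K \<inter> {x. 1 \<bullet> x = 1}"
  have "l \<noteq> 0" using assms(5) by auto
  then have "0 < 1 \<bullet> l" using assms(3,4) inner_one_pos by blast
  define l' where "l' = (1 / (1 \<bullet> l)) *\<^sub>R l"
  have "l' \<in> ?C" "0 < a \<bullet> l'"
    using assms(2,4,5) \<open>0 < 1 \<bullet> l\<close> by (auto simp: l'_def convex_cone_def conic_def)
  have "norm x \<le> 1" if "x \<in> ?C" for x
    using that norm_le_inner_one[OF assms(3), of x] by auto
  then have cpt: "compact ?C"
    unfolding compact_eq_bounded_closed
    by (auto intro!: boundedI[of _ 1] closed_Int closed_hyperplane assms(1))
  moreover have "?C \<noteq> {}" using \<open>l' \<in> ?C\<close> by blast
  moreover have "continuous_on ?C (\<lambda>x. a \<bullet> x)" by (intro continuous_intros)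
  ultimately obtain m where "is_argmax (\<lambda>x. a \<bullet> x) ?C m"
    using continuous_attains_sup[OF cpt] unfolding is_argmax_def by blast
  then obtain e where e: "e extreme_point_of ?C" "is_argmax (\<lambda>x. a \<bullet> x) ?C e"
    using assms(1-3) extreme_point_exists_argmax[of ?C a m]
    by (auto intro: closed_Int closed_hyperplane convex_Int convex_hyperplane simp: convex_cone_def)
  have "a \<bullet> l' \<le> a \<bullet> e" using e(2) \<open>l' \<in> ?C\<close> by (simp add: is_argmax_def)
  then have "0 < a \<bullet> e" using \<open>0 < a \<bullet> l'\<close> by linarith
  moreover have "extreme_ray_of e K"
    using assms(2,3) e(1) by (intro extreme_ray_of_base) (auto simp: convex_cone_def)
  ultimately show ?thesis by blast
qed

lemma lp_min_attained_at_extreme_point: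
  fixes B :: "real^'y^'d"
  assumes "{y. 0 \<le> y \<and> q \<le> B *v y} \<noteq> {}" and "lp_feasible (transpose B) c \<noteq> {}"
  shows "\<exists>y p. 0 \<le> y \<and> q \<le> B *v y \<and> p extreme_point_of lp_feasible (transpose B) c \<and>
           c \<bullet> y = q \<bullet> p \<and> (\<forall>y'. 0 \<le> y' \<and> q \<le> B *v y' \<longrightarrow> c \<bullet> y \<le> c \<bullet> y')"
proof -
  let ?Pi = "lp_feasible (transpose B) c"
  have weak: "q \<bullet> p \<le> c \<bullet> y" if "p \<in> ?Pi" "0 \<le> y" "q \<le> B *v y" for p y
    using lp_weak_duality[of p "transpose B" c y q] that by simp
  obtain y0 where "0 \<le> y0" "q \<le> B *v y0" using assms(1) by blast
  then obtain p0 where p0: "is_argmax (\<lambda>p. q \<bullet> p) ?Pi p0"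
    using lp_optimum_attained[OF assms(2), of q "c \<bullet> y0"] weak by blast
  obtain y where y: "0 \<le> y" "q \<le> B *v y" "q \<bullet> p0 = c \<bullet> y"
    using lp_strong_duality[OF p0] by auto
  obtain p where p: "p extreme_point_of ?Pi" "is_argmax (\<lambda>p. q \<bullet> p) ?Pi p"
    using extreme_point_exists_argmax[OF closed_lp_feasible convex_lp_feasible _ p0]
    by (auto simp: lp_feasible_def)
  have "q \<bullet> p = q \<bullet> p0" using p(2) p0 by (auto simp: is_argmax_def intro: order.antisym)
  moreover have "c \<bullet> y \<le> c \<bullet> y'" if "0 \<le> y'" "q \<le> B *v y'" for y'
    using weak[OF _ that, of p0] p0 y(3) by (simp add: is_argmax_def)
  ultimately show ?thesis using y p(1) by (intro exI[of _ y] exI[of _ p]) auto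
qed

text \<open>If the covering system is infeasible, \<open>0\<close> cannot be optimal on the dual cone:
  otherwise strong duality would produce a feasible \<open>y\<close>.\<close>
lemma lp_min_infeasible_ray:
  fixes B :: "real^'y^'d"
  assumes "{y. 0 \<le> y \<and> q \<le> B *v y} = {}"
  shows "\<exists>g. extreme_ray_of g (lp_feasible (transpose B) 0) \<and> 0 < q \<bullet> g"
proof -
  let ?K = "lp_feasible (transpose B) 0"
  have nonneg: "\<And>x. x \<in> ?K \<Longrightarrow> 0 \<le> x" by (simp add: lp_feasible_def)
  have "\<exists>g\<in>?K. 0 < q \<bullet> g"
  proof (rule ccontr)
    assume "\<not> (\<exists>g\<in>?K. 0 < q \<bullet> g)"
    then have "is_argmax (\<lambda>g. q \<bullet> g) ?K 0"
      by (auto simp: is_argmax_def lp_feasible_def not_less)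
    then obtain y where "0 \<le> y" "q \<le> B *v y"
      using lp_strong_duality by fastforce
    then show False using assms by blast
  qed
  then show ?thesis
    using extreme_ray_exists_nonneg_cone[OF closed_lp_feasible convex_cone_lp_feasible_0 nonneg]
    by blast
qed

section \<open>Epigraph reformulations\<close>

lemma epigraph_reformulation_value:
  fixes f :: "'a \<Rightarrow> real" and W :: "'a \<Rightarrow> ereal"
  assumes sound: "\<And>x \<eta>. feas x \<eta> \<Longrightarrow> x \<in> X \<and> W x \<le> ereal \<eta>"
    and complete: "\<And>x. x \<in> X \<Longrightarrow> W x < \<infinity> \<Longrightarrow> \<exists>\<eta>. feas x \<eta> \<and> W x = ereal \<eta>"
  shows "Inf {ereal (f x) + ereal \<eta> | x \<eta>. feas x \<eta>} = (INF x\<in>X. ereal (f x) + W x)"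
proof (rule antisym)
  show "Inf {ereal (f x) + ereal \<eta> | x \<eta>. feas x \<eta>} \<le> (INF x\<in>X. ereal (f x) + W x)"
  proof (rule INF_greatest)
    fix x assume "x \<in> X"
    show "Inf {ereal (f x) + ereal \<eta> | x \<eta>. feas x \<eta>} \<le> ereal (f x) + W x"
    proof (cases "W x < \<infinity>")
      case True
      then obtain \<eta> where "feas x \<eta>" "W x = ereal \<eta>" using complete \<open>x \<in> X\<close> by blast
      then show ?thesis by (auto intro: Inf_lower)
    qed simp
  qed
  show "(INF x\<in>X. ereal (f x) + W x) \<le> Inf {ereal (f x) + ereal \<eta> | x \<eta>. feas x \<eta>}"
  proof (rule Inf_greatest)
    fix z assume "z \<in> {ereal (f x) + ereal \<eta> | x \<eta>. feas x \<eta>}"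
    then obtain x \<eta> where z: "z = ereal (f x) + ereal \<eta>" and "feas x \<eta>" by blast
    then have "x \<in> X" "W x \<le> ereal \<eta>" using sound by auto
    then have "(INF x\<in>X. ereal (f x) + W x) \<le> ereal (f x) + W x" by (intro INF_lower)
    also have "\<dots> \<le> z" unfolding z using \<open>W x \<le> ereal \<eta>\<close> by (rule add_left_mono)
    finally show "(INF x\<in>X. ereal (f x) + W x) \<le> z" .
  qed
qed

lemma epigraph_reformulation_argmin:
  fixes f :: "'a \<Rightarrow> real" and W :: "'a \<Rightarrow> ereal"
  assumes sound: "\<And>x \<eta>. feas x \<eta> \<Longrightarrow> x \<in> X \<and> W x \<le> ereal \<eta>"
    and complete: "\<And>x. x \<in> X \<Longrightarrow> W x < \<infinity> \<Longrightarrow> \<exists>\<eta>. feas x \<eta> \<and> W x = ereal \<eta>"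
  shows "x \<in> X \<and> W x < \<infinity> \<and> ereal (f x) + W x = (INF x\<in>X. ereal (f x) + W x) \<longleftrightarrow>
         (\<exists>\<eta>. feas x \<eta> \<and> ereal (f x) + ereal \<eta> = Inf {ereal (f x) + ereal \<eta> | x \<eta>. feas x \<eta>})"
  (is "?robust \<longleftrightarrow> ?epi")
proof
  assume ?robust
  then show ?epi
    using complete epigraph_reformulation_value[OF sound complete] by (metis (no_types, lifting))
next
  assume ?epi
  then obtain \<eta> where \<eta>: "feas x \<eta>"
    "ereal (f x) + ereal \<eta> = (INF x\<in>X. ereal (f x) + W x)"
    using epigraph_reformulation_value[OF sound complete] by auto
  then have "x \<in> X" "W x \<le> ereal \<eta>" using sound by auto
  then have "ereal (f x) + W x \<le> (INF x\<in>X. ereal (f x) + W x)"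
    using \<eta>(2) by (metis add_left_mono)
  moreover have "(INF x\<in>X. ereal (f x) + W x) \<le> ereal (f x) + W x"
    using \<open>x \<in> X\<close> by (rule INF_lower)
  ultimately show ?robust
    using \<open>x \<in> X\<close> \<open>W x \<le> ereal \<eta>\<close> by (auto intro: order.antisym le_less_trans)
qed

section \<open>The two-stage robust problem\<close>

lemma Piset_eq_lp_feasible: "Piset B2 c = lp_feasible (transpose B2) c"
  unfolding Piset_def lp_feasible_def ..

lemma Pi_cone_eq_Piset_0: "Pi_cone B2 = Piset B2 0"
  unfolding Pi_cone_def Piset_def ..

lemma Yset_weak_duality:
  assumes "y \<in> Yset B1 B2 E d x u" "p \<in> Piset B2 c"
  shows "(d - B1 *v x - E *v u) \<bullet> p \<le> c \<bullet> y"
  using lp_weak_duality[of p "transpose B2" c y] assms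
  by (simp add: Yset_def Piset_eq_lp_feasible)

locale two_stage_robust =
  fixes A :: "real^'x^'a" and b :: "real^'a" and I :: "'x set"
    and F :: "real^'x \<Rightarrow> real^'u^'r" and G :: "real^'x^'r" and h :: "real^'r"
    and B1 :: "real^'x^'d" and B2 :: "real^'y^'d" and E :: "real^'u^'d" and d :: "real^'d"
    and c1 :: "real^'x" and c2 :: "real^'y"
    and P R :: "(real^'d) set"
  assumes U_nonempty: "\<forall>x\<in>Xset A b I. Uset F G h x \<noteq> {}"
    and U_bounded: "\<forall>x\<in>Xset A b I. bounded (Uset F G h x)"
    and value_finite: "\<bar>Inf {ereal (c1 \<bullet> x + c2 \<bullet> y) | x u y.
               x \<in> Xset A b I \<and> u \<in> Uset F G h x \<and> y \<in> Yset B1 B2 E d x u}\<bar> \<noteq> \<infinity>"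
    and P_def: "P = {p. p extreme_point_of Piset B2 c2}"
    and R_rays: "\<forall>g\<in>R. extreme_ray_of g (Pi_cone B2)"
    and R_all: "\<forall>g'. extreme_ray_of g' (Pi_cone B2) \<longrightarrow> (\<exists>g\<in>R. \<exists>t>0. g' = t *\<^sub>R g)"
begin

abbreviation rhs :: "real^'x \<Rightarrow> real^'u \<Rightarrow> real^'d" where
  "rhs x u \<equiv> d - B1 *v x - E *v u"

text \<open>If \<open>\<Pi>\<close> were empty, Farkas' lemma would give a recession direction of every
  second-stage polyhedron along which \<open>c2\<close> decreases, contradicting the finite value.\<close>
lemma Piset_nonempty: "Piset B2 c2 \<noteq> {}"
proof
  assume "Piset B2 c2 = {}"
  then obtain z where z: "0 \<le> z" "0 \<le> B2 *v z" "c2 \<bullet> z < 0"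
    using lp_farkas[of "transpose B2" c2] by (auto simp: Piset_eq_lp_feasible)
  let ?S = "{ereal (c1 \<bullet> x + c2 \<bullet> y) | x u y.
               x \<in> Xset A b I \<and> u \<in> Uset F G h x \<and> y \<in> Yset B1 B2 E d x u}"
  have "?S \<noteq> {}"
  proof
    assume empty: "?S = {}"
    have "Inf ?S = \<infinity>" unfolding empty by (simp add: top_ereal_def)
    then show False using value_finite by simp
  qed
  then obtain x u y where xuy: "x \<in> Xset A b I" "u \<in> Uset F G h x" "y \<in> Yset B1 B2 E d x u"
    by blast
  have "Inf ?S \<le> ereal K" for K
  proof -
    define t where "t = \<bar>K - (c1 \<bullet> x + c2 \<bullet> y)\<bar> / (- (c2 \<bullet> z))"
    have "0 \<le> t" unfolding t_def using z(3) by (intro divide_nonneg_pos) auto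
    then have "0 \<le> t *\<^sub>R z" "0 \<le> B2 *v (t *\<^sub>R z)"
      using z(1,2) by (auto simp: less_eq_vec_def matrix_vector_mult_scaleR)
    then have shifted: "y + t *\<^sub>R z \<in> Yset B1 B2 E d x u"
      using xuy(3) by (auto simp: Yset_def matrix_vector_right_distrib intro: add_mono order.trans)
    have "c2 \<bullet> (t *\<^sub>R z) = - \<bar>K - (c1 \<bullet> x + c2 \<bullet> y)\<bar>"
      using z(3) by (simp add: t_def)
    then have value_le: "c1 \<bullet> x + c2 \<bullet> (y + t *\<^sub>R z) \<le> K"
      by (simp add: inner_add_right abs_if)
    have "Inf ?S \<le> ereal (c1 \<bullet> x + c2 \<bullet> (y + t *\<^sub>R z))"
      using xuy(1,2) shifted by (intro Inf_lower) blast
    also have "\<dots> \<le> ereal K" using value_le by simp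
    finally show ?thesis .
  qed
  then have "Inf ?S = - \<infinity>" by (rule ereal_bot)
  then show False using value_finite by simp
qed

lemma second_stage_attained:
  assumes "Yset B1 B2 E d x u \<noteq> {}"
  shows "\<exists>y\<in>Yset B1 B2 E d x u. \<exists>p\<in>P.
           second_stage B1 B2 E d c2 x u = ereal (c2 \<bullet> y) \<and> c2 \<bullet> y = rhs x u \<bullet> p"
proof -
  obtain y p where y: "y \<in> Yset B1 B2 E d x u" "p extreme_point_of Piset B2 c2"
    "c2 \<bullet> y = rhs x u \<bullet> p" "\<forall>y'\<in>Yset B1 B2 E d x u. c2 \<bullet> y \<le> c2 \<bullet> y'"
    using lp_min_attained_at_extreme_point[of "rhs x u" B2 c2] assms Piset_nonempty
    unfolding Yset_def Piset_eq_lp_feasible by blast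
  have "second_stage B1 B2 E d c2 x u = ereal (c2 \<bullet> y)"
    unfolding second_stage_def using y(1,4) by (intro antisym INF_lower INF_greatest) simp_all
  then show ?thesis using y P_def by blast
qed

lemma second_stage_infeasible_ray:
  assumes "Yset B1 B2 E d x u = {}"
  shows "\<exists>g\<in>R. 0 < rhs x u \<bullet> g"
proof -
  obtain g' where g': "extreme_ray_of g' (Pi_cone B2)" "0 < rhs x u \<bullet> g'"
    using lp_min_infeasible_ray[of "rhs x u" B2] assms
    by (auto simp: Yset_def Pi_cone_eq_Piset_0 Piset_eq_lp_feasible)
  then obtain g t where "g \<in> R" "0 < t" "g' = t *\<^sub>R g" using R_all by blast
  then show ?thesis using g'(2) by (auto simp: zero_less_mult_iff)
qed

lemma rhs_le_response:
  assumes "sel_argmax F G h E x p v" "u \<in> Uset F G h x"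
  shows "rhs x u \<bullet> p \<le> rhs x v \<bullet> p"
  using assms by (simp add: sel_argmax_def is_argmax_def inner_diff_left)

text \<open>For \<open>u \<in> U(x)\<close>, the responses to the extreme rays rule out an infeasible second
  stage, and by LP duality \<open>Q(x, u) = rhs x u \<bullet> p \<le> rhs x (uP p) \<bullet> p \<le> c2 \<bullet> yP p\<close>
  for some extreme point \<open>p\<close>.\<close>
lemma worst_case_le_if_reform_feasible:
  assumes "reform_feasible A b I B1 B2 E d c2 P R (sel_argmax F G h E) x (ereal \<eta>) uP yP vR yR"
  shows "worst_case F G h B1 B2 E d c2 x \<le> ereal \<eta>"
  unfolding worst_case_def
proof (rule SUP_least)
  fix u assume u: "u \<in> Uset F G h x"
  have P: "c2 \<bullet> yP p \<le> \<eta>" "yP p \<in> Yset B1 B2 E d x (uP p)" "sel_argmax F G h E x p (uP p)"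
    if "p \<in> P" for p
    using assms that by (auto simp: reform_feasible_def)
  have R: "yR g \<in> Yset B1 B2 E d x (vR g)" "sel_argmax F G h E x g (vR g)" if "g \<in> R" for g
    using assms that by (auto simp: reform_feasible_def)
  have "Yset B1 B2 E d x u \<noteq> {}"
  proof
    assume "Yset B1 B2 E d x u = {}"
    then obtain g where g: "g \<in> R" "0 < rhs x u \<bullet> g" using second_stage_infeasible_ray by blast
    have "g \<in> Piset B2 0"
      using R_rays g(1) by (simp add: extreme_ray_of_def Pi_cone_eq_Piset_0)
    then have "rhs x (vR g) \<bullet> g \<le> 0 \<bullet> yR g"
      by (rule Yset_weak_duality[OF R(1)[OF g(1)]])
    then show False using rhs_le_response[OF R(2)[OF g(1)] u] g(2) by simp
  qed
  then obtain y p where yp: "p \<in> P" "second_stage B1 B2 E d c2 x u = ereal (c2 \<bullet> y)"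
    "c2 \<bullet> y = rhs x u \<bullet> p"
    using second_stage_attained by blast
  have "c2 \<bullet> y \<le> rhs x (uP p) \<bullet> p" using yp(3) rhs_le_response[OF P(3)[OF yp(1)] u] by simp
  also have "\<dots> \<le> c2 \<bullet> yP p"
    using Yset_weak_duality[OF P(2)[OF yp(1)]] yp(1) P_def by (auto simp: extreme_point_of_def)
  also have "\<dots> \<le> \<eta>" using P(1)[OF yp(1)] .
  finally show "second_stage B1 B2 E d c2 x u \<le> ereal \<eta>" using yp(2) by simp
qed

lemma reform_feasible_if_worst_case_finite:
  assumes x: "x \<in> Xset A b I" and W: "worst_case F G h B1 B2 E d c2 x < \<infinity>"
  shows "\<exists>\<eta> uP yP vR yR. reform_feasible A b I B1 B2 E d c2 P R (sel_argmax F G h E) x (ereal \<eta>) uP yP vR yR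
           \<and> worst_case F G h B1 B2 E d c2 x = ereal \<eta>"
proof -
  let ?U = "Uset F G h x" and ?W = "worst_case F G h B1 B2 E d c2 x"
  have Q_le_W: "second_stage B1 B2 E d c2 x u \<le> ?W" if "u \<in> ?U" for u
    unfolding worst_case_def using that by (rule SUP_upper)
  have Y: "Yset B1 B2 E d x u \<noteq> {}" if "u \<in> ?U" for u
  proof
    assume "Yset B1 B2 E d x u = {}"
    then have "second_stage B1 B2 E d c2 x u = \<infinity>" by (simp add: second_stage_def top_ereal_def)
    then show False using Q_le_W[OF that] W by simp
  qed
  have "compact ?U"
    using U_bounded x closed_lp_feasible[of "F x" "h + G *v x"]
    by (simp add: compact_eq_bounded_closed Uset_def lp_feasible_def)
  moreover have "?U \<noteq> {}" using U_nonempty x by blast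
  moreover have "continuous_on ?U (\<lambda>u. (- (E *v u)) \<bullet> p)" for p
    by (intro continuous_intros linear_continuous_on matrix_vector_mul_linear)
  ultimately have "\<exists>u. sel_argmax F G h E x p u" for p
    using continuous_attains_sup unfolding sel_argmax_def is_argmax_def by blast
  then obtain resp where resp: "\<And>p. sel_argmax F G h E x p (resp p)" by metis
  then have resp_U: "resp p \<in> ?U" for p by (simp add: sel_argmax_def is_argmax_def)
  obtain y where y: "\<And>p. y p \<in> Yset B1 B2 E d x (resp p)"
    "\<And>p. second_stage B1 B2 E d c2 x (resp p) = ereal (c2 \<bullet> y p)"
    using second_stage_attained[OF Y[OF resp_U]] by metis
  have "?W \<noteq> - \<infinity>" using Q_le_W[OF resp_U] y(2) by (metis MInfty_neq_ereal(1) ereal_infty_less_eq(2))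
  then obtain \<eta> where \<eta>: "?W = ereal \<eta>" using W by (cases ?W) auto
  have "reform_feasible A b I B1 B2 E d c2 P R (sel_argmax F G h E) x (ereal \<eta>) resp y resp y"
    unfolding reform_feasible_def using x resp y Q_le_W[OF resp_U] \<eta> by auto
  then show ?thesis using \<eta> by blast
qed

lemma reformulation_equivalent:
  "reform_val A b I B1 B2 E d c1 c2 P R (sel_argmax F G h E) = robust_val A b I F G h B1 B2 E d c1 c2
   \<and> (\<forall>x. robust_opt A b I F G h B1 B2 E d c1 c2 x
          \<longleftrightarrow> reform_opt A b I B1 B2 E d c1 c2 P R (sel_argmax F G h E) x)"
proof -
  define feas where "feas x \<eta> \<longleftrightarrow> (\<exists>uP yP vR yR.
    reform_feasible A b I B1 B2 E d c2 P R (sel_argmax F G h E) x (ereal \<eta>) uP yP vR yR)" for x \<eta>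
  have sound: "x \<in> Xset A b I \<and> worst_case F G h B1 B2 E d c2 x \<le> ereal \<eta>" if "feas x \<eta>" for x \<eta>
    using that worst_case_le_if_reform_feasible by (auto simp: feas_def reform_feasible_def)
  have complete: "\<exists>\<eta>. feas x \<eta> \<and> worst_case F G h B1 B2 E d c2 x = ereal \<eta>"
    if "x \<in> Xset A b I" "worst_case F G h B1 B2 E d c2 x < \<infinity>" for x
    using reform_feasible_if_worst_case_finite[OF that] by (auto simp: feas_def)
  have val: "reform_val A b I B1 B2 E d c1 c2 P R (sel_argmax F G h E) =
             Inf {ereal (c1 \<bullet> x) + ereal \<eta> | x \<eta>. feas x \<eta>}"
    unfolding reform_val_def feas_def by (rule arg_cong[where f = Inf]) blast
  show ?thesis
    using epigraph_reformulation_value[OF sound complete] epigraph_reformulation_argmin[OF sound complete]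
    unfolding robust_val_def robust_opt_def robust_obj_def reform_opt_def val
    by (auto simp: feas_def)
qed

end

theorem theorem4:
  fixes A :: "real^'x^'a" and b :: "real^'a" and I :: "'x set"
    and F :: "real^'x \<Rightarrow> real^'u^'r" and G :: "real^'x^'r" and h :: "real^'r"
    and B1 :: "real^'x^'d" and B2 :: "real^'y^'d" and E :: "real^'u^'d" and d :: "real^'d"
    and c1 :: "real^'x" and c2 :: "real^'y"
    and P R :: "(real^'d) set"
  assumes A1: "\<forall>x\<in>Xset A b I. Uset F G h x \<noteq> {}"
    and A2: "\<forall>x\<in>Xset A b I. bounded (Uset F G h x)"
    and A3: "\<bar>Inf {ereal (c1 \<bullet> x + c2 \<bullet> y) | x u y.
               x \<in> Xset A b I \<and> u \<in> Uset F G h x \<and> y \<in> Yset B1 B2 E d x u}\<bar> \<noteq> \<infinity>"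
    and P_def: "P = {p. p extreme_point_of Piset B2 c2}"
    and P_fin: "finite P"
    and R_fin: "finite R"
    and R_rays: "\<forall>g\<in>R. extreme_ray_of g (Pi_cone B2)"
    and R_all: "\<forall>g'. extreme_ray_of g' (Pi_cone B2) \<longrightarrow> (\<exists>g\<in>R. \<exists>t>0. g' = t *\<^sub>R g)"
  shows "(reform_val A b I B1 B2 E d c1 c2 P R (sel_argmax F G h E)
            = robust_val A b I F G h B1 B2 E d c1 c2
          \<and> (\<forall>x. robust_opt A b I F G h B1 B2 E d c1 c2 x
                 \<longleftrightarrow> reform_opt A b I B1 B2 E d c1 c2 P R (sel_argmax F G h E) x))
       \<and> (reform_val A b I B1 B2 E d c1 c2 P R (sel_kkt F G h E)
            = robust_val A b I F G h B1 B2 E d c1 c2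
          \<and> (\<forall>x. robust_opt A b I F G h B1 B2 E d c1 c2 x
                 \<longleftrightarrow> reform_opt A b I B1 B2 E d c1 c2 P R (sel_kkt F G h E) x))"
proof -
  interpret two_stage_robust A b I F G h B1 B2 E d c1 c2 P R
    using A1 A2 A3 P_def R_rays R_all by unfold_locales
  show ?thesis using reformulation_equivalent by (simp add: sel_kkt_eq_sel_argmax)
qed

end
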